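(* Let $R,S\in GL(2,\mathbb{C})$ be diagonalizable matrices with eigenvalues $r_1,r_2\in S^1$ and $s_1,s_2\in S^1$ respectively, such that $r_1\ne r_2$, $s_1\ne s_2$, $\{r_1,r_2\}\cap\{s_1,s_2\}=\emptyset$, and $1$ is an eigenvalue of $RS^{-1}$. Then there is a non-degenerate Hermitian form $\langle\cdot,\cdot\rangle_H$ on $\mathbb{C}^2$ invariant under both $R$ and $S$, unique up to multiplication by a real scalar. Moreover, $\langle\cdot,\cdot\rangle_H$ is definite if and only if the two pairs $\{r_1,r_2\}$ and $\{s_1,s_2\}$ interlace on the unit circle.
   Context: $S^1$ is the unit circle in $\mathbb{C}$. A Hermitian form $h$ is invariant under $R$ if $h(Rv,Rw)=h(v,w)$ for all $v,w\in\mathbb{C}^2$. Two pairs of distinct points on a circle interlace if each of the two arcs determined by one pair contains exactly one point of the other pair. *)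

theory Defs
  imports "HOL-Analysis.Analysis"
begin

type_synonym cmat2 = "complex ^ 2 ^ 2"
type_synonym cvec2 = "complex ^ 2"

definition diag2 :: "complex \<Rightarrow> complex \<Rightarrow> cmat2" where
  "diag2 a b = vector [vector [a, 0], vector [0, b]]"

definition diagonalizable_with :: "cmat2 \<Rightarrow> complex \<Rightarrow> complex \<Rightarrow> bool" where
  "diagonalizable_with A a b \<longleftrightarrow>
     (\<exists>P::cmat2. invertible P \<and> A = P ** diag2 a b ** matrix_inv P)"

definition is_eigenvalue :: "cmat2 \<Rightarrow> complex \<Rightarrow> bool" where
  "is_eigenvalue A l \<longleftrightarrow> (\<exists>v::cvec2. v \<noteq> 0 \<and> A *v v = l *s v)"

definition hform :: "cmat2 \<Rightarrow> cvec2 \<Rightarrow> cvec2 \<Rightarrow> complex" where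
  "hform H v w = (\<Sum>i\<in>UNIV. \<Sum>j\<in>UNIV. cnj (v $ i) * (H $ i $ j) * w $ j)"

definition hermitian_mat :: "cmat2 \<Rightarrow> bool" where
  "hermitian_mat H \<longleftrightarrow> (\<forall>i j. H $ i $ j = cnj (H $ j $ i))"

definition nondegenerate_form :: "cmat2 \<Rightarrow> bool" where
  "nondegenerate_form H \<longleftrightarrow> (\<forall>w. (\<forall>v. hform H v w = 0) \<longrightarrow> w = 0)"

definition invariant_form :: "cmat2 \<Rightarrow> cmat2 \<Rightarrow> bool" where
  "invariant_form H R \<longleftrightarrow> (\<forall>v w. hform H (R *v v) (R *v w) = hform H v w)"

definition definite_form :: "cmat2 \<Rightarrow> bool" where
  "definite_form H \<longleftrightarrow>
     (\<forall>v. v \<noteq> 0 \<longrightarrow> Re (hform H v v) > 0) \<or> (\<forall>v. v \<noteq> 0 \<longrightarrow> Re (hform H v v) < 0)"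

definition ccw_arc :: "complex \<Rightarrow> complex \<Rightarrow> complex set" where
  "ccw_arc a b = {z. \<exists>t T. 0 < t \<and> t < T \<and> T < 2 * pi \<and> b = a * cis T \<and> z = a * cis t}"

definition interlace :: "complex \<Rightarrow> complex \<Rightarrow> complex \<Rightarrow> complex \<Rightarrow> bool" where
  "interlace a1 a2 b1 b2 \<longleftrightarrow>
     card ({b1, b2} \<inter> ccw_arc a1 a2) = 1 \<and> card ({b1, b2} \<inter> ccw_arc a2 a1) = 1 \<and>
     card ({a1, a2} \<inter> ccw_arc b1 b2) = 1 \<and> card ({a1, a2} \<inter> ccw_arc b2 b1) = 1"

end

theory Submission
  imports Defs
begin

text \<open>
  Conjugating by an eigenbasis of R we may assume R = diag(r1, r2). As r1 and r2 are distinct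
  points of the unit circle, a Hermitian form invariant under R is then diagonal with real
  entries k1, k2. Write S = [[p, q], [u, t]] in this basis: its trace and determinant are
  s1 + s2 and s1 s2, and det (R - S) = 0 because R S^-1 has eigenvalue 1. Conjugating these
  relations and using |ri| = |sj| = 1 gives t = s1 s2 cnj(p) and q u = s1 s2 (|p|^2 - 1), which
  is nonzero since the two spectra are disjoint. Invariance under S then forces
  k1 |p|^2 + k2 |u|^2 = k1, so the invariant forms are the real multiples of
  diag(|u|^2, 1 - |p|^2). This form is definite iff 1 - |p|^2 > 0, and
  (1 - |p|^2) s1 s2 (r1 - r2)^2 = (r1 - s1) (r1 - s2) (r2 - s1) (r2 - s2).
  Writing r2, s1, s2 as r1 cis T, r1 cis x, r1 cis y with angles in (0, 2 pi), the real ratio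
  1 - |p|^2 equals -4 sin(x/2) sin(y/2) sin((T-x)/2) sin((T-y)/2) / sin(T/2)^2, which is
  positive iff exactly one of x, y lies below T, i.e. iff the two pairs interlace.
\<close>

section \<open>Hermitian forms on C^2 as 2x2 matrices\<close>

definition conj_transpose :: "cmat2 \<Rightarrow> cmat2" where
  "conj_transpose M = (\<chi> i j. cnj (M $ j $ i))"

lemma cmat2_eq_iff:
  "(A::cmat2) = B \<longleftrightarrow> A$1$1 = B$1$1 \<and> A$1$2 = B$1$2 \<and> A$2$1 = B$2$1 \<and> A$2$2 = B$2$2"
  by (auto simp: vec_eq_iff forall_2)

lemma cvec2_eq_iff: "(v::cvec2) = w \<longleftrightarrow> v$1 = w$1 \<and> v$2 = w$2"
  by (auto simp: vec_eq_iff forall_2)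

lemma matrix_matrix_mult_cmat2_nth [simp]:
  "((A::cmat2) ** B) $ i $ j = A$i$1 * B$1$j + A$i$2 * B$2$j"
  by (simp add: matrix_matrix_mult_def sum_2)

lemma matrix_vector_mult_cvec2_nth [simp]:
  "((A::cmat2) *v v) $ i = A$i$1 * v$1 + A$i$2 * v$2"
  by (simp add: matrix_vector_mult_def sum_2)

lemma conj_transpose_nth [simp]: "conj_transpose M $ i $ j = cnj (M $ j $ i)"
  by (simp add: conj_transpose_def)

lemma mat_cmat2_nth [simp]:
  "(mat c :: cmat2) $ 1 $ 1 = c" "(mat c :: cmat2) $ 2 $ 2 = c"
  "(mat c :: cmat2) $ 1 $ 2 = 0" "(mat c :: cmat2) $ 2 $ 1 = 0"
  by (simp_all add: mat_def)

lemma diag2_nth [simp]: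
  "diag2 a b $ 1 $ 1 = a" "diag2 a b $ 2 $ 2 = b" "diag2 a b $ 1 $ 2 = 0" "diag2 a b $ 2 $ 1 = 0"
  by (simp_all add: diag2_def)

lemma hform_cvec2:
  "hform H v w = cnj (v$1) * H$1$1 * w$1 + cnj (v$1) * H$1$2 * w$2
                + cnj (v$2) * H$2$1 * w$1 + cnj (v$2) * H$2$2 * w$2"
  by (simp add: hform_def sum_2)

lemma conj_transpose_mult: "conj_transpose (A ** B) = conj_transpose B ** conj_transpose A"
  by (simp add: cmat2_eq_iff)

lemma conj_transpose_mat_1 [simp]: "conj_transpose (mat 1) = mat 1"
  by (simp add: cmat2_eq_iff)

lemma conj_transpose_conj_transpose [simp]: "conj_transpose (conj_transpose M) = M"
  by (simp add: cmat2_eq_iff)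

lemma hermitian_mat_iff_conj_transpose: "hermitian_mat H \<longleftrightarrow> conj_transpose H = H"
  unfolding hermitian_mat_def vec_eq_iff conj_transpose_nth by metis

lemma hform_congruence: "hform (conj_transpose P ** H ** P) v w = hform H (P *v v) (P *v w)"
  by (simp add: hform_cvec2 algebra_simps)

lemma hform_axis_left: "hform H (axis i 1) w = (H *v w) $ i"
  using exhaust_2[of i] by (auto simp: hform_cvec2 axis_def)

lemma hform_axis: "hform H (axis i 1) (axis j 1) = H $ i $ j"
  using exhaust_2[of i] exhaust_2[of j] by (auto simp: hform_cvec2 axis_def)

lemma invariant_form_iff: "invariant_form H M \<longleftrightarrow> conj_transpose M ** H ** M = H"
proof
  assume "invariant_form H M"
  then have "hform (conj_transpose M ** H ** M) (axis i 1) (axis j 1) = hform H (axis i 1) (axis j 1)"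
    for i j
    by (simp add: invariant_form_def hform_congruence)
  then show "conj_transpose M ** H ** M = H"
    by (simp add: hform_axis vec_eq_iff)
qed (simp add: invariant_form_def flip: hform_congruence)

lemma nondegenerate_form_if_det_nonzero:
  assumes "det H \<noteq> 0"
  shows "nondegenerate_form H"
  unfolding nondegenerate_form_def
proof (intro allI impI)
  fix w assume w: "\<forall>v. hform H v w = 0"
  have "(H *v w) $ i = 0" for i
  proof -
    have "hform H (axis i 1) w = 0"
      using w by blast
    then show ?thesis
      by (simp only: hform_axis_left)
  qed
  then have "H *v w = H *v 0"
    by (simp add: vec_eq_iff)
  moreover have "inj ((*v) H)"
    using assms by (simp add: inj_matrix_vector_mult invertible_det_nz)
  ultimately show "w = 0"
    by (blast dest: injD)
qed

lemma conj_transpose_congruence_cancel: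
  assumes "P ** Q = mat 1"
  shows "conj_transpose Q ** (conj_transpose P ** H ** P) ** Q = H"
proof -
  have "conj_transpose Q ** (conj_transpose P ** H ** P) ** Q
      = conj_transpose (P ** Q) ** H ** (P ** Q)"
    by (simp add: conj_transpose_mult matrix_mul_assoc)
  then show ?thesis
    using assms by simp
qed

lemma conj_transpose_congruence_scaleR:
  "conj_transpose P ** (c *\<^sub>R H) ** P = c *\<^sub>R (conj_transpose P ** H ** P)"
  by (simp add: cmat2_eq_iff algebra_simps)

lemma hermitian_mat_congruence:
  "hermitian_mat H \<Longrightarrow> hermitian_mat (conj_transpose P ** H ** P)"
  by (simp add: hermitian_mat_iff_conj_transpose conj_transpose_mult matrix_mul_assoc)

lemma invariant_form_congruence:
  assumes "P ** Q = mat 1" and "invariant_form H M"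
  shows "invariant_form (conj_transpose P ** H ** P) (Q ** M ** P)"
proof -
  have "P ** (Q ** M ** P) = M ** P"
    using assms(1) by (simp add: matrix_mul_assoc)
  then have "P *v ((Q ** M ** P) *v v) = M *v (P *v v)" for v
    by (simp add: matrix_vector_mul_assoc)
  then show ?thesis
    using assms(2) by (simp add: invariant_form_def hform_congruence)
qed

lemma nondegenerate_form_congruence:
  assumes "P ** Q = mat 1" and "Q ** P = mat 1" and "nondegenerate_form H"
  shows "nondegenerate_form (conj_transpose P ** H ** P)"
  unfolding nondegenerate_form_def
proof (intro allI impI)
  fix w assume "\<forall>v. hform (conj_transpose P ** H ** P) v w = 0"
  then have "hform H (P *v (Q *v v)) (P *v w) = 0" for v
    by (simp add: hform_congruence)
  then have "hform H v (P *v w) = 0" for v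
    using assms(1) by (simp add: matrix_vector_mul_assoc)
  then have "P *v w = 0"
    using assms(3) by (simp add: nondegenerate_form_def)
  then have "(Q ** P) *v w = 0"
    by (simp flip: matrix_vector_mul_assoc)
  then show "w = 0"
    using assms(2) by simp
qed

lemma definite_form_congruence:
  assumes "Q ** P = mat 1" and "definite_form H"
  shows "definite_form (conj_transpose P ** H ** P)"
proof -
  have "P *v v \<noteq> 0" if "v \<noteq> 0" for v
  proof
    assume "P *v v = 0"
    then have "(Q ** P) *v v = 0"
      by (simp flip: matrix_vector_mul_assoc)
    then show False
      using that assms(1) by simp
  qed
  then show ?thesis
    using assms(2) unfolding definite_form_def hform_congruence by blast
qed

lemma hform_diag2_of_real:
  "hform (diag2 (of_real a) (of_real b)) x x = of_real (a * (cmod (x$1))\<^sup>2 + b * (cmod (x$2))\<^sup>2)"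
  by (simp add: hform_cvec2 algebra_simps flip: complex_norm_square)

lemma weighted_sum_pos:
  fixes a b m n :: real
  assumes "0 < a" "0 < b" "0 \<le> m" "0 \<le> n" "0 < m + n"
  shows "0 < a * m + b * n"
  using assms by (smt (verit) mult_pos_pos mult_nonneg_nonneg)

lemma definite_form_diag2_iff: "definite_form (diag2 (of_real a) (of_real b)) \<longleftrightarrow> 0 < a * b"
proof
  have "Re (hform (diag2 (of_real a) (of_real b)) (axis 1 1) (axis 1 1)) = a"
    and "Re (hform (diag2 (of_real a) (of_real b)) (axis 2 1) (axis 2 1)) = b"
    by (simp_all add: hform_diag2_of_real axis_def)
  moreover have "axis 1 1 \<noteq> (0::cvec2)" "axis 2 1 \<noteq> (0::cvec2)"
    by (simp_all add: axis_eq_0_iff)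
  moreover assume "definite_form (diag2 (of_real a) (of_real b))"
  ultimately show "0 < a * b"
    unfolding definite_form_def by (metis mult_pos_pos mult_neg_neg)
next
  have norms: "0 < (cmod (x$1))\<^sup>2 + (cmod (x$2))\<^sup>2" if "x \<noteq> 0" for x :: cvec2
    using that by (simp add: sum_power2_gt_zero_iff cvec2_eq_iff)
  assume "0 < a * b"
  then consider "0 < a" "0 < b" | "0 < -a" "0 < -b"
    by (auto simp: zero_less_mult_iff)
  then show "definite_form (diag2 (of_real a) (of_real b))"
  proof cases
    case 1
    then have "0 < a * (cmod (x$1))\<^sup>2 + b * (cmod (x$2))\<^sup>2" if "x \<noteq> 0" for x :: cvec2
      using norms[OF that] by (intro weighted_sum_pos) auto
    then show ?thesis
      by (simp add: definite_form_def hform_diag2_of_real)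
  next
    case 2
    then have "a * (cmod (x$1))\<^sup>2 + b * (cmod (x$2))\<^sup>2 < 0" if "x \<noteq> 0" for x :: cvec2
      using norms[OF that] weighted_sum_pos[of "-a" "-b" "(cmod (x$1))\<^sup>2" "(cmod (x$2))\<^sup>2"]
      by simp
    then show ?thesis
      by (simp add: definite_form_def hform_diag2_of_real)
  qed
qed

section \<open>The eigenvalue relations in an eigenbasis of R\<close>

lemma matrix_inv_cancel:
  assumes "invertible (A::'a::semiring_1^'n^'n)"
  shows "A ** matrix_inv A = mat 1" and "matrix_inv A ** A = mat 1"
  using someI_ex[OF assms[unfolded invertible_def]] by (simp_all add: matrix_inv_def)

lemma diagonalizable_withE:
  assumes "diagonalizable_with A a b"
  obtains P Q where "P ** Q = mat 1" "Q ** P = mat 1" "A = P ** diag2 a b ** Q"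
  using assms matrix_inv_cancel unfolding diagonalizable_with_def by blast

lemma similar_cancel:
  fixes A P Q :: "'a::semiring_1^'n^'n"
  assumes "Q ** P = mat 1"
  shows "Q ** (P ** A ** Q) ** P = A"
proof -
  have "Q ** (P ** A ** Q) ** P = (Q ** P) ** A ** (Q ** P)"
    by (simp add: matrix_mul_assoc)
  then show ?thesis
    using assms by simp
qed

lemma trace_similar:
  fixes A P Q :: "'a::comm_ring_1^'n^'n"
  assumes "P ** Q = mat 1"
  shows "trace (Q ** A ** P) = trace A"
  by (metis assms matrix_mul_assoc matrix_mul_lid trace_mul_sym)

lemma det_similar:
  fixes A P Q :: "'a::comm_ring_1^'n^'n"
  assumes "P ** Q = mat 1"
  shows "det (Q ** A ** P) = det A"
proof -
  have "det P * det Q = 1"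
    using assms by (metis det_I det_mul)
  moreover have "det (Q ** A ** P) = det A * (det P * det Q)"
    by (simp add: det_mul algebra_simps)
  ultimately show ?thesis
    by simp
qed

lemma trace_det_diagonalizable:
  assumes "diagonalizable_with A a b"
  shows "trace A = a + b" and "det A = a * b"
proof -
  obtain P Q where "Q ** P = mat 1" "A = P ** diag2 a b ** Q"
    using assms by (rule diagonalizable_withE)
  then have "trace A = trace (diag2 a b)" "det A = det (diag2 a b)"
    by (simp_all add: trace_similar det_similar)
  then show "trace A = a + b" "det A = a * b"
    by (simp_all add: trace_def sum_2 det_2)
qed

lemma det_diff_eq_0_if_eigenvalue_1:
  assumes "invertible S" and "is_eigenvalue (R ** matrix_inv S) 1"
  shows "det (R - S) = 0"
proof -
  obtain v where "v \<noteq> 0" and v: "(R ** matrix_inv S) *v v = v"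
    using assms(2) unfolding is_eigenvalue_def by auto
  define w where "w = matrix_inv S *v v"
  have Sw: "S *v w = v"
    unfolding w_def matrix_vector_mul_assoc matrix_inv_cancel(1)[OF assms(1)] by simp
  have Rw: "R *v w = v"
    unfolding w_def matrix_vector_mul_assoc using v .
  have "(R - S) *v w = (R - S) *v 0"
    by (simp add: matrix_vector_mult_diff_rdistrib Rw Sw)
  moreover have "w \<noteq> 0"
    using Sw \<open>v \<noteq> 0\<close> by auto
  ultimately have "\<not> inj ((*v) (R - S))"
    unfolding inj_def by blast
  then have "\<not> invertible (R - S)"
    using inj_matrix_vector_mult by blast
  then show ?thesis
    by (simp add: invertible_det_nz)
qed

lemma unit_cnj_eq_inverse: "cmod z = 1 \<Longrightarrow> cnj z = inverse z"
  by (metis complex_norm_square inverse_unique of_real_1 power_one)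

lemma normal_form_diagonal_entry:
  fixes r1 r2 s1 s2 p t :: complex
  assumes unit: "cmod r1 = 1" "cmod r2 = 1" "cmod s1 = 1" "cmod s2 = 1"
    and "r1 \<noteq> r2"
    and trace: "p + t = s1 + s2"
    and lin: "r1 * t + r2 * p = r1 * r2 + s1 * s2"
  shows "t = s1 * s2 * cnj p"
proof -
  \<comment> \<open>Both (p, t) and (s1 s2 cnj t, s1 s2 cnj p) solve the linear system
    x + y = s1 + s2, r2 x + r1 y = r1 r2 + s1 s2, whose solution is unique as r1 \<noteq> r2.\<close>
  have u: "r1 * cnj r1 = 1" "r2 * cnj r2 = 1" "s1 * cnj s1 = 1" "s2 * cnj s2 = 1"
    using unit by (simp_all flip: complex_norm_square)
  have "cnj p + cnj t = cnj s1 + cnj s2"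
    and "cnj r1 * cnj t + cnj r2 * cnj p = cnj r1 * cnj r2 + cnj s1 * cnj s2"
    using arg_cong[OF trace, of cnj] arg_cong[OF lin, of cnj] by simp_all
  then have "r1 * (s1 * s2 * cnj p) + r2 * (s1 + s2 - s1 * s2 * cnj p) = r1 * r2 + s1 * s2"
    using u by algebra
  moreover have "r1 * t + r2 * (s1 + s2 - t) = r1 * r2 + s1 * s2"
    using trace lin by algebra
  ultimately have "(r1 - r2) * (s1 * s2 * cnj p - t) = 0"
    by algebra
  then show ?thesis
    using \<open>r1 \<noteq> r2\<close> by simp
qed

lemma normal_form_entries:
  fixes r1 r2 s1 s2 p q u t :: complex
  assumes unit: "cmod r1 = 1" "cmod r2 = 1" "cmod s1 = 1" "cmod s2 = 1"
    and "r1 \<noteq> r2" and disjoint: "{r1, r2} \<inter> {s1, s2} = {}"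
    and trace: "p + t = s1 + s2" and det: "p * t - q * u = s1 * s2"
    and singular: "(r1 - p) * (r2 - t) = q * u"
  shows "t = s1 * s2 * cnj p" and "q * u = s1 * s2 * (p * cnj p - 1)" and "q * u \<noteq> 0"
    and "(1 - p * cnj p) * (s1 * s2 * (r1 - r2)\<^sup>2) = (r1 - s1) * (r1 - s2) * (r2 - s1) * (r2 - s2)"
proof -
  have lin: "r1 * t + r2 * p = r1 * r2 + s1 * s2"
    using det singular by algebra
  show t: "t = s1 * s2 * cnj p"
    using normal_form_diagonal_entry[OF unit \<open>r1 \<noteq> r2\<close> trace lin] .
  show qu: "q * u = s1 * s2 * (p * cnj p - 1)"
    using det by (simp add: t algebra_simps)
  show "q * u \<noteq> 0"
  proof
    assume "q * u = 0"
    then have "(p - s1) * (p - s2) = 0" and "(t - s1) * (t - s2) = 0" and "(r1 - p) * (r2 - t) = 0"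
      using trace det singular by algebra+
    then show False
      using disjoint by auto
  qed
  show "(1 - p * cnj p) * (s1 * s2 * (r1 - r2)\<^sup>2) = (r1 - s1) * (r1 - s2) * (r2 - s1) * (r2 - s2)"
    using trace lin singular qu by algebra
qed

section \<open>Interlacing on the unit circle\<close>

lemma Arg2pi_cis: "0 \<le> a \<Longrightarrow> a < 2 * pi \<Longrightarrow> Arg2pi (cis a) = a"
  by (rule Arg2pi_unique[of 1]) (auto simp: cis_conv_exp)

definition ccw_angle :: "real \<Rightarrow> real \<Rightarrow> real" where
  "ccw_angle A Z = (if A \<le> Z then Z - A else Z - A + 2 * pi)"

lemma cis_ccw_angle: "cis (ccw_angle A Z) = cis (Z - A)"
  by (simp add: ccw_angle_def cis.ctr)

lemma ccw_angle_bounds: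
  "0 \<le> A \<Longrightarrow> A < 2 * pi \<Longrightarrow> 0 \<le> Z \<Longrightarrow> Z < 2 * pi \<Longrightarrow> 0 \<le> ccw_angle A Z \<and> ccw_angle A Z < 2 * pi"
  by (simp add: ccw_angle_def)

lemma mem_ccw_arc_cis_iff:
  assumes "c \<noteq> 0" and A: "0 \<le> A" "A < 2 * pi" and B: "0 \<le> B" "B < 2 * pi"
    and Z: "0 \<le> Z" "Z < 2 * pi" and "A \<noteq> B"
  shows "c * cis Z \<in> ccw_arc (c * cis A) (c * cis B) \<longleftrightarrow> Z \<noteq> A \<and> ccw_angle A Z < ccw_angle A B"
proof -
  have rotation: "c * cis W = c * cis A * cis \<theta> \<longleftrightarrow> \<theta> = ccw_angle A W"
    if "0 \<le> \<theta>" "\<theta> < 2 * pi" "0 \<le> W" "W < 2 * pi" for \<theta> W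
  proof -
    have "c * cis W = c * cis A * cis \<theta> \<longleftrightarrow> cis W = cis A * cis \<theta>"
      using \<open>c \<noteq> 0\<close> by (simp add: mult.assoc)
    also have "\<dots> \<longleftrightarrow> cis \<theta> = cis (ccw_angle A W)"
      by (auto simp: cis_ccw_angle field_simps simp flip: cis_divide)
    also have "\<dots> \<longleftrightarrow> \<theta> = ccw_angle A W"
      using that ccw_angle_bounds[OF A, of W] by (metis Arg2pi_cis)
    finally show ?thesis .
  qed
  have "ccw_angle A B < 2 * pi" "0 < ccw_angle A Z \<longleftrightarrow> Z \<noteq> A"
    using A B Z by (auto simp: ccw_angle_def)
  then show ?thesis
    unfolding ccw_arc_def using rotation B Z
    by (smt (verit) ccw_angle_bounds[OF A] mem_Collect_eq)
qed

lemma card_doubleton_Int_eq_1_iff: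
  "b1 \<noteq> b2 \<Longrightarrow> card ({b1, b2} \<inter> X) = 1 \<longleftrightarrow> (b1 \<in> X \<longleftrightarrow> b2 \<notin> X)"
  by (cases "b1 \<in> X"; cases "b2 \<in> X") (auto simp: Int_insert_left)

lemma interlace_cis_iff:
  assumes "c \<noteq> 0" and "0 < T" "T < 2 * pi" "0 < x" "x < 2 * pi" "0 < y" "y < 2 * pi"
    and "x \<noteq> y" "x \<noteq> T" "y \<noteq> T"
  shows "interlace c (c * cis T) (c * cis x) (c * cis y) \<longleftrightarrow> (x < T \<longleftrightarrow> \<not> y < T)"
proof -
  have mem: "c * cis Z \<in> ccw_arc (c * cis A) (c * cis B) \<longleftrightarrow> Z \<noteq> A \<and> ccw_angle A Z < ccw_angle A B"
    if "0 \<le> A" "A < 2 * pi" "0 \<le> B" "B < 2 * pi" "0 \<le> Z" "Z < 2 * pi" "A \<noteq> B" for A B Z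
    using mem_ccw_arc_cis_iff[OF \<open>c \<noteq> 0\<close> that] .
  have "Arg2pi (cis 0) \<noteq> Arg2pi (cis T)" and "Arg2pi (cis x) \<noteq> Arg2pi (cis y)"
    using assms Arg2pi_cis[of 0] by (simp_all add: Arg2pi_cis)
  then have distinct: "c * cis 0 \<noteq> c * cis T" "c * cis x \<noteq> c * cis y"
    using \<open>c \<noteq> 0\<close> by auto
  have "interlace (c * cis 0) (c * cis T) (c * cis x) (c * cis y) \<longleftrightarrow> (x < T \<longleftrightarrow> \<not> y < T)"
    unfolding interlace_def card_doubleton_Int_eq_1_iff[OF distinct(1)]
      card_doubleton_Int_eq_1_iff[OF distinct(2)]
    by (subst (1 2 3 4 5 6 7 8) mem) (use assms in \<open>auto simp: ccw_angle_def\<close>)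
  then show ?thesis
    by simp
qed

lemma cis_diff: "cis a - cis b = 2 * \<i> * of_real (sin ((a - b) / 2)) * cis ((a + b) / 2)"
proof -
  have "cis a = cis ((a + b) / 2) * cis ((a - b) / 2)" "cis b = cis ((a + b) / 2) * cis (- ((a - b) / 2))"
    by (simp_all add: cis_mult field_simps)
  moreover have "cis ((a - b) / 2) - cis (- ((a - b) / 2)) = 2 * \<i> * of_real (sin ((a - b) / 2))"
    by (simp add: complex_eq_iff)
  ultimately show ?thesis
    by (simp add: algebra_simps flip: right_diff_distrib)
qed

lemma sin_half_pos_iff: "\<bar>\<theta>\<bar> < 2 * pi \<Longrightarrow> 0 < sin (\<theta> / 2) \<longleftrightarrow> 0 < \<theta>"
  by (smt (verit, best) field_sum_of_halves sin_ge_zero sin_gt_zero sin_minus)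

lemma sin_half_neg_iff: "\<bar>\<theta>\<bar> < 2 * pi \<Longrightarrow> sin (\<theta> / 2) < 0 \<longleftrightarrow> \<theta> < 0"
  using sin_half_pos_iff[of "- \<theta>"] by simp

lemma cross_ratio_cis:
  assumes "sin (T / 2) \<noteq> 0"
  shows "(1 - cis x) * (1 - cis y) * (cis T - cis x) * (cis T - cis y) =
    of_real (-4 * sin (x / 2) * sin (y / 2) * sin ((T - x) / 2) * sin ((T - y) / 2) / (sin (T / 2))\<^sup>2)
      * (cis x * cis y * (1 - cis T)\<^sup>2)"
proof -
  define C where "C = cis (x + y + T)"
  have one_minus_cis: "1 - cis a = - 2 * \<i> * of_real (sin (a / 2)) * cis (a / 2)" for a
    using cis_diff[of 0 a] by simp
  have "cis (x / 2) * cis (y / 2) * cis ((T + x) / 2) * cis ((T + y) / 2) = C"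
    unfolding C_def cis_mult by (rule arg_cong[where f = cis]) (simp add: field_simps)
  then have numerator: "(1 - cis x) * (1 - cis y) * (cis T - cis x) * (cis T - cis y)
      = 16 * of_real (sin (x / 2) * sin (y / 2) * sin ((T - x) / 2) * sin ((T - y) / 2)) * C"
    unfolding one_minus_cis cis_diff[of T] by (simp add: algebra_simps power4_eq_xxxx)
  have "cis x * cis y * (cis (T / 2))\<^sup>2 = C"
    unfolding C_def power2_eq_square cis_mult by simp
  then have denominator: "cis x * cis y * (1 - cis T)\<^sup>2 = - 4 * of_real ((sin (T / 2))\<^sup>2) * C"
    unfolding one_minus_cis by (simp add: algebra_simps power2_eq_square)
  show ?thesis
    unfolding numerator denominator using assms by (simp add: field_simps)
qed

lemma cross_ratio_cis_pos_iff:
  assumes "0 < T" "T < 2 * pi" "0 < x" "x < 2 * pi" "0 < y" "y < 2 * pi" "x \<noteq> T" "y \<noteq> T"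
  shows "0 < -4 * sin (x / 2) * sin (y / 2) * sin ((T - x) / 2) * sin ((T - y) / 2) / (sin (T / 2))\<^sup>2
    \<longleftrightarrow> (x < T \<longleftrightarrow> \<not> y < T)"
proof -
  define c where "c = 4 * sin (x / 2) * sin (y / 2) / (sin (T / 2))\<^sup>2"
  have "0 < sin (T / 2)" "0 < sin (x / 2)" "0 < sin (y / 2)"
    using assms by (simp_all add: sin_half_pos_iff)
  then have "0 < c"
    unfolding c_def by simp
  have "-4 * sin (x / 2) * sin (y / 2) * sin ((T - x) / 2) * sin ((T - y) / 2) / (sin (T / 2))\<^sup>2
      = - c * (sin ((T - x) / 2) * sin ((T - y) / 2))"
    unfolding c_def by (simp add: field_simps)
  also have "0 < \<dots> \<longleftrightarrow> sin ((T - x) / 2) * sin ((T - y) / 2) < 0"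
    using \<open>0 < c\<close> by (simp add: mult_less_0_iff)
  also have "\<dots> \<longleftrightarrow> (x < T \<longleftrightarrow> \<not> y < T)"
    using assms sin_half_pos_iff[of "T - x"] sin_half_neg_iff[of "T - x"]
      sin_half_pos_iff[of "T - y"] sin_half_neg_iff[of "T - y"]
    by (auto simp: mult_less_0_iff)
  finally show ?thesis .
qed

lemma unit_circle_polar:
  assumes "cmod c = 1" and "cmod z = 1"
  shows "c * cis (Arg2pi (z / c)) = z"
proof -
  have "cmod (z / c) = 1"
    using assms by (simp add: norm_divide)
  then have "z / c = cis (Arg2pi (z / c))"
    using Arg2pi_eq[of "z / c"] by (simp add: cis_conv_exp)
  then show ?thesis
    using assms(1) by (auto simp: field_simps)
qed

lemma cross_ratio_interlace:
  fixes r1 r2 s1 s2 :: complex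
  assumes unit: "cmod r1 = 1" "cmod r2 = 1" "cmod s1 = 1" "cmod s2 = 1"
    and "r1 \<noteq> r2" "s1 \<noteq> s2" and "{r1, r2} \<inter> {s1, s2} = {}"
  obtains K :: real
  where "(r1 - s1) * (r1 - s2) * (r2 - s1) * (r2 - s2) = of_real K * (s1 * s2 * (r1 - r2)\<^sup>2)"
    and "0 < K \<longleftrightarrow> interlace r1 r2 s1 s2"
proof -
  have "r1 \<noteq> 0"
    using unit by auto
  define T x y where "T = Arg2pi (r2 / r1)" and "x = Arg2pi (s1 / r1)" and "y = Arg2pi (s2 / r1)"
  have r2: "r1 * cis T = r2" and s1: "r1 * cis x = s1" and s2: "r1 * cis y = s2"
    unfolding T_def x_def y_def using unit_circle_polar unit by auto
  have bounds: "0 \<le> T" "T < 2 * pi" "0 \<le> x" "x < 2 * pi" "0 \<le> y" "y < 2 * pi"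
    unfolding T_def x_def y_def using Arg2pi by auto
  have "T \<noteq> 0" "x \<noteq> 0" "y \<noteq> 0" and distinct: "x \<noteq> y" "x \<noteq> T" "y \<noteq> T"
    using r2 s1 s2 assms(5-7) by auto
  with bounds have angles: "0 < T" "T < 2 * pi" "0 < x" "x < 2 * pi" "0 < y" "y < 2 * pi"
    by simp_all
  define K where "K = -4 * sin (x / 2) * sin (y / 2) * sin ((T - x) / 2) * sin ((T - y) / 2) / (sin (T / 2))\<^sup>2"
  have "sin (T / 2) \<noteq> 0"
    using angles by (simp add: sin_half_pos_iff less_imp_neq[symmetric])
  have "(r1 - s1) * (r1 - s2) * (r2 - s1) * (r2 - s2)
      = r1 ^ 4 * ((1 - cis x) * (1 - cis y) * (cis T - cis x) * (cis T - cis y))"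
    unfolding r2[symmetric] s1[symmetric] s2[symmetric] by algebra
  also have "\<dots> = r1 ^ 4 * (of_real K * (cis x * cis y * (1 - cis T)\<^sup>2))"
    unfolding K_def using cross_ratio_cis[OF \<open>sin (T / 2) \<noteq> 0\<close>] by simp
  also have "\<dots> = of_real K * (s1 * s2 * (r1 - r2)\<^sup>2)"
    unfolding r2[symmetric] s1[symmetric] s2[symmetric] by algebra
  finally have "(r1 - s1) * (r1 - s2) * (r2 - s1) * (r2 - s2) = of_real K * (s1 * s2 * (r1 - r2)\<^sup>2)" .
  moreover have "interlace r1 r2 s1 s2 \<longleftrightarrow> 0 < K"
    unfolding r2[symmetric] s1[symmetric] s2[symmetric] K_def
    by (simp only: interlace_cis_iff[OF \<open>r1 \<noteq> 0\<close> angles distinct]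
        cross_ratio_cis_pos_iff[OF angles distinct(2,3)])
  ultimately show thesis
    using that by blast
qed

section \<open>Invariant forms\<close>

lemma hermitian_invariant_diag2_eq_diag2:
  assumes "cmod r1 = 1" and "r1 \<noteq> r2" and "hermitian_mat H" and "invariant_form H (diag2 r1 r2)"
  shows "H = diag2 (of_real (Re (H$1$1))) (of_real (Re (H$2$2)))"
proof -
  have "(conj_transpose (diag2 r1 r2) ** H ** diag2 r1 r2) $ 1 $ 2 = H $ 1 $ 2"
    using assms(4) by (simp only: invariant_form_iff)
  then have "(cnj r1 * r2 - 1) * H$1$2 = 0"
    by (simp add: algebra_simps)
  moreover have "cnj r1 * r2 \<noteq> 1"
    using assms(1,2) by (auto simp: unit_cnj_eq_inverse field_simps)
  ultimately have "H$1$2 = 0"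
    by simp
  moreover have "H$2$1 = cnj (H$1$2)" "H$1$1 = cnj (H$1$1)" "H$2$2 = cnj (H$2$2)"
    using assms(3) unfolding hermitian_mat_def by blast+
  ultimately show ?thesis
    by (simp add: cmat2_eq_iff complex_eq_iff)
qed

lemma invariant_form_diag2_normal_form:
  fixes M :: cmat2 and \<sigma> :: complex
  assumes "cmod \<sigma> = 1" and "M$2$2 = \<sigma> * cnj (M$1$1)"
    and "M$1$2 * M$2$1 = \<sigma> * (M$1$1 * cnj (M$1$1) - 1)"
  shows "invariant_form (diag2 (M$2$1 * cnj (M$2$1)) (1 - M$1$1 * cnj (M$1$1))) M"
proof -
  have "\<sigma> * cnj \<sigma> = 1"
    using assms(1) by (simp flip: complex_norm_square)
  moreover have "cnj (M$2$2) = cnj \<sigma> * M$1$1"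
    and "cnj (M$1$2) * cnj (M$2$1) = cnj \<sigma> * (cnj (M$1$1) * M$1$1 - 1)"
    using arg_cong[OF assms(2), of cnj] arg_cong[OF assms(3), of cnj] by simp_all
  ultimately show ?thesis
    unfolding invariant_form_iff cmat2_eq_iff matrix_matrix_mult_cmat2_nth conj_transpose_nth diag2_nth
    using assms(2,3) by algebra
qed

lemma hermitian_invariant_normal_form_unique:
  fixes M :: cmat2
  assumes "cmod r1 = 1" and "r1 \<noteq> r2" and "M$2$1 \<noteq> 0"
    and "hermitian_mat H" and "invariant_form H (diag2 r1 r2)" and "invariant_form H M"
  shows "\<exists>c::real. H = c *\<^sub>R diag2 (of_real ((cmod (M$2$1))\<^sup>2)) (of_real (1 - (cmod (M$1$1))\<^sup>2))"
proof -
  define k1 k2 where "k1 = Re (H$1$1)" and "k2 = Re (H$2$2)"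
  define a b where "a = (cmod (M$2$1))\<^sup>2" and "b = 1 - (cmod (M$1$1))\<^sup>2"
  have H: "H = diag2 (of_real k1) (of_real k2)"
    unfolding k1_def k2_def using hermitian_invariant_diag2_eq_diag2[OF assms(1,2,4,5)] .
  have "(conj_transpose M ** H ** M) $ 1 $ 1 = H $ 1 $ 1"
    using assms(6) by (simp only: invariant_form_iff)
  then have "of_real k1 * (M$1$1 * cnj (M$1$1)) + of_real k2 * (M$2$1 * cnj (M$2$1)) = (of_real k1 :: complex)"
    unfolding H by (simp add: algebra_simps)
  then have "complex_of_real (k1 * (1 - b) + k2 * a) = complex_of_real k1"
    unfolding a_def b_def by (simp add: algebra_simps flip: complex_norm_square)
  then have "k1 * (1 - b) + k2 * a = k1"
    by (simp only: of_real_eq_iff)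
  moreover have "0 < a"
    unfolding a_def using assms(3) by simp
  ultimately have "k1 = (k1 / a) * a" and "k2 = (k1 / a) * b"
    by (simp_all add: field_simps)
  then have "complex_of_real k1 = (k1 / a) *\<^sub>R complex_of_real a"
    and "complex_of_real k2 = (k1 / a) *\<^sub>R complex_of_real b"
    by (metis of_real_mult scaleR_conv_of_real)+
  then have "H = (k1 / a) *\<^sub>R diag2 (of_real a) (of_real b)"
    unfolding H by (simp add: cmat2_eq_iff)
  then show ?thesis
    unfolding a_def b_def by blast
qed

lemma invariant_forms_normal_form:
  fixes M :: cmat2
  assumes unit: "cmod r1 = 1" "cmod r2 = 1" "cmod s1 = 1" "cmod s2 = 1"
    and "r1 \<noteq> r2" "s1 \<noteq> s2" "{r1, r2} \<inter> {s1, s2} = {}"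
    and "trace M = s1 + s2" "det M = s1 * s2" "det (diag2 r1 r2 - M) = 0"
  obtains H where "hermitian_mat H" "nondegenerate_form H"
    "invariant_form H (diag2 r1 r2)" "invariant_form H M"
    "\<And>H'. hermitian_mat H' \<Longrightarrow> invariant_form H' (diag2 r1 r2) \<Longrightarrow> invariant_form H' M
       \<Longrightarrow> \<exists>c::real. H' = c *\<^sub>R H"
    "definite_form H \<longleftrightarrow> interlace r1 r2 s1 s2"
proof -
  define p q u t where "p = M$1$1" and "q = M$1$2" and "u = M$2$1" and "t = M$2$2"
  have "p + t = s1 + s2" "p * t - q * u = s1 * s2" "(r1 - p) * (r2 - t) = q * u"
    using assms(8-10) by (simp_all add: p_def q_def u_def t_def trace_def sum_2 det_2)
  note entries = normal_form_entries[OF unit assms(5,7) this]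
  obtain K where K: "(r1 - s1) * (r1 - s2) * (r2 - s1) * (r2 - s2) = of_real K * (s1 * s2 * (r1 - r2)\<^sup>2)"
    and interlace: "0 < K \<longleftrightarrow> interlace r1 r2 s1 s2"
    using cross_ratio_interlace[OF assms(1-7)] by blast
  define a b where "a = (cmod u)\<^sup>2" and "b = 1 - (cmod p)\<^sup>2"
  have "0 < a"
    unfolding a_def using entries(3) by simp
  have "s1 * s2 * (r1 - r2)\<^sup>2 \<noteq> 0"
    using unit assms(5) by auto
  then have "1 - p * cnj p = of_real K"
    using entries(4) K by simp
  then have "complex_of_real b = complex_of_real K"
    unfolding b_def by (simp flip: complex_norm_square)
  then have "b = K"
    by simp
  have "p * cnj p \<noteq> 1"
    using entries(2,3) by auto
  then have "b \<noteq> 0"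
    unfolding b_def by (metis complex_norm_square eq_iff_diff_eq_0 of_real_1)
  define H where "H = diag2 (of_real a) (of_real b)"
  show thesis
  proof
    show "hermitian_mat H"
      unfolding H_def hermitian_mat_def by (simp add: vec_eq_iff forall_2 diag2_def)
    show "nondegenerate_form H"
      unfolding H_def using \<open>0 < a\<close> \<open>b \<noteq> 0\<close> by (intro nondegenerate_form_if_det_nonzero) (simp add: det_2)
    have "cnj r1 * r1 = 1" "cnj r2 * r2 = 1"
      using unit(1,2) by (metis complex_norm_square mult.commute of_real_1 power_one)+
    then show "invariant_form H (diag2 r1 r2)"
      unfolding H_def invariant_form_iff cmat2_eq_iff by simp
    show "invariant_form H M"
      using invariant_form_diag2_normal_form[of "s1 * s2" M] entries(1,2) unit
      unfolding H_def a_def b_def p_def u_def t_def q_def by (simp add: norm_mult flip: complex_norm_square)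
    show "\<exists>c::real. H' = c *\<^sub>R H"
      if "hermitian_mat H'" "invariant_form H' (diag2 r1 r2)" "invariant_form H' M" for H'
      using hermitian_invariant_normal_form_unique[OF unit(1) assms(5) _ that] entries(3)
      unfolding H_def a_def b_def p_def u_def by auto
    show "definite_form H \<longleftrightarrow> interlace r1 r2 s1 s2"
      unfolding H_def definite_form_diag2_iff using \<open>0 < a\<close> \<open>b = K\<close> interlace
      by (simp add: zero_less_mult_iff)
  qed
qed

lemma unique_invariant_form_similar:
  fixes P Q R S H0 :: cmat2
  assumes PQ: "P ** Q = mat 1" and QP: "Q ** P = mat 1"
    and H0: "hermitian_mat H0" "nondegenerate_form H0"
      "invariant_form H0 (Q ** R ** P)" "invariant_form H0 (Q ** S ** P)"
    and unique: "\<And>H'. hermitian_mat H' \<Longrightarrow> invariant_form H' (Q ** R ** P)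
      \<Longrightarrow> invariant_form H' (Q ** S ** P) \<Longrightarrow> \<exists>c::real. H' = c *\<^sub>R H0"
  shows "\<exists>H. hermitian_mat H \<and> nondegenerate_form H \<and> invariant_form H R \<and> invariant_form H S
    \<and> (\<forall>H'. hermitian_mat H' \<and> nondegenerate_form H' \<and> invariant_form H' R \<and> invariant_form H' S
           \<longrightarrow> (\<exists>c::real. H' = c *\<^sub>R H))
    \<and> (definite_form H \<longleftrightarrow> definite_form H0)"
proof -
  define H where "H = conj_transpose Q ** H0 ** Q"
  have "P ** (Q ** R ** P) ** Q = R" and "P ** (Q ** S ** P) ** Q = S"
    using PQ by (simp_all add: similar_cancel)
  then have forms: "hermitian_mat H" "nondegenerate_form H" "invariant_form H R" "invariant_form H S"
    unfolding H_def using hermitian_mat_congruence[OF H0(1)] nondegenerate_form_congruence[OF QP PQ H0(2)]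
      invariant_form_congruence[OF QP H0(3)] invariant_form_congruence[OF QP H0(4)]
    by simp_all
  have unique_H: "\<exists>c::real. H' = c *\<^sub>R H"
    if H': "hermitian_mat H'" "invariant_form H' R" "invariant_form H' S" for H'
  proof -
    obtain c where "conj_transpose P ** H' ** P = c *\<^sub>R H0"
      using unique[OF hermitian_mat_congruence[OF H'(1)] invariant_form_congruence[OF PQ H'(2)]
          invariant_form_congruence[OF PQ H'(3)]]
      by blast
    then have "H' = c *\<^sub>R H"
      unfolding H_def using conj_transpose_congruence_cancel[OF PQ, of H']
      by (simp add: conj_transpose_congruence_scaleR)
    then show ?thesis ..
  qed
  have definite_H: "definite_form H \<longleftrightarrow> definite_form H0"
  proof
    assume "definite_form H"
    then have "definite_form (conj_transpose P ** H ** P)"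
      by (rule definite_form_congruence[OF QP])
    then show "definite_form H0"
      unfolding H_def conj_transpose_congruence_cancel[OF QP] .
  next
    assume "definite_form H0"
    then show "definite_form H"
      unfolding H_def by (rule definite_form_congruence[OF PQ])
  qed
  show ?thesis
  proof (intro exI[of _ H] conjI allI impI)
    show "hermitian_mat H" "nondegenerate_form H" "invariant_form H R" "invariant_form H S"
      by (fact forms)+
    show "definite_form H \<longleftrightarrow> definite_form H0"
      by (fact definite_H)
    fix H'
    assume "hermitian_mat H' \<and> nondegenerate_form H' \<and> invariant_form H' R \<and> invariant_form H' S"
    then show "\<exists>c::real. H' = c *\<^sub>R H"
      using unique_H by blast
  qed
qed

theorem lemma24:
  fixes R S :: cmat2 and r1 r2 s1 s2 :: complex
  assumes "invertible R" and "invertible S"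
    and "diagonalizable_with R r1 r2" and "diagonalizable_with S s1 s2"
    and "cmod r1 = 1" and "cmod r2 = 1" and "cmod s1 = 1" and "cmod s2 = 1"
    and "r1 \<noteq> r2" and "s1 \<noteq> s2"
    and "{r1, r2} \<inter> {s1, s2} = {}"
    and "is_eigenvalue (R ** matrix_inv S) 1"
  shows "\<exists>H. hermitian_mat H \<and> nondegenerate_form H \<and> invariant_form H R \<and> invariant_form H S
           \<and> (\<forall>H'. hermitian_mat H' \<and> nondegenerate_form H' \<and> invariant_form H' R \<and> invariant_form H' S
                  \<longrightarrow> (\<exists>c::real. H' = c *\<^sub>R H))
           \<and> (definite_form H \<longleftrightarrow> interlace r1 r2 s1 s2)"
proof -
  obtain P Q where PQ: "P ** Q = mat 1" and QP: "Q ** P = mat 1" and R: "R = P ** diag2 r1 r2 ** Q"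
    using assms(3) by (rule diagonalizable_withE)
  have QRP: "Q ** R ** P = diag2 r1 r2"
    unfolding R using QP by (rule similar_cancel)
  have "diag2 r1 r2 - Q ** S ** P = Q ** (R - S) ** P"
    unfolding QRP[symmetric] by (simp add: cmat2_eq_iff algebra_simps)
  then have "det (diag2 r1 r2 - Q ** S ** P) = 0"
    using PQ det_diff_eq_0_if_eigenvalue_1[OF assms(2,12)] by (simp add: det_similar)
  moreover have "trace (Q ** S ** P) = s1 + s2" and "det (Q ** S ** P) = s1 * s2"
    using trace_det_diagonalizable[OF assms(4)] PQ by (simp_all add: trace_similar det_similar)
  ultimately obtain H0 where H0: "hermitian_mat H0" "nondegenerate_form H0"
      "invariant_form H0 (Q ** R ** P)" "invariant_form H0 (Q ** S ** P)"
    and unique: "\<And>H'. hermitian_mat H' \<Longrightarrow> invariant_form H' (Q ** R ** P)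
      \<Longrightarrow> invariant_form H' (Q ** S ** P) \<Longrightarrow> \<exists>c::real. H' = c *\<^sub>R H0"
    and "definite_form H0 \<longleftrightarrow> interlace r1 r2 s1 s2"
    using invariant_forms_normal_form[OF assms(5-11)] unfolding QRP by auto
  then show ?thesis
    using unique_invariant_form_similar[OF PQ QP H0 unique] by simp
qed

end
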